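(* There are absolute constants $\gamma>0$ and $C_0\ge 1$ such that for every integer $k>5$ the following holds. For every (deterministic) terminal-cuts scheme for $k$-terminal networks whose edge costs are integers in $\{1,\dots,n^{C_0}\}$ (where $n$ is the number of vertices), there exists such a $k$-terminal network $(G,c)$ on which the memory $M=P(G,c)$ produced by preprocessing occupies at least $2^{\gamma k}$ machine words, where a machine word consists of $\lceil\log_2 n\rceil$ bits.
   Context: A $k$-terminal network $(G,c)$ is an undirected graph $G$ with edge costs $c$ and a set $Q\subseteq V(G)$ of $k$ terminals. For $S\subset Q$, $S\ne\emptyset,Q$, $\bar S=Q\setminus S$, and $\mathrm{mincut}_{G,c}(S,\bar S)$ is the minimum total cost of the set of edges crossing a cut $(W,V(G)\setminus W)$ with $W\cap Q\in\{S,\bar S\}$. A terminal-cuts (TC) scheme consists of a preprocessing map $P$ that maps each $k$-terminal network $(G,c)$ (with the stated edge costs) to a memory image $M$ (a bit string), and a query map $Q(\cdot\,;\cdot)$ that, given $S\subset Q$ and $M$ only (without access to $(G,c)$), outputs a value, such that $Q(S;P(G,c))=\mathrm{mincut}_{G,c}(S,\bar S)$ for all networks and all $S\subset Q$, $S\neq\emptyset,Q$. Storage is measured in machine words of $\Theta(\log n)$ bits. *)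

theory Defs
  imports Complex_Main
begin

text \<open>A k-terminal network is encoded as a triple (n, c, T):
  vertices are 0..n-1; c u v is the integer cost of the undirected edge {u,v},
  with c u v = 0 meaning "no edge" (so c is symmetric, zero on the diagonal and
  outside the vertex set); T is the set of terminals.\<close>

type_synonym network = "nat \<times> (nat \<Rightarrow> nat \<Rightarrow> nat) \<times> nat set"

definition valid_network :: "nat \<Rightarrow> real \<Rightarrow> network \<Rightarrow> bool" where
  "valid_network k C0 N = (case N of (n, c, T) \<Rightarrow>
      (\<forall>u v. c u v = c v u) \<and>
      (\<forall>u. c u u = 0) \<and>
      (\<forall>u v. \<not> (u < n \<and> v < n) \<longrightarrow> c u v = 0) \<and>
      (\<forall>u v. c u v \<noteq> 0 \<longrightarrow> real (c u v) \<le> real n powr C0) \<and>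
      T \<subseteq> {..<n} \<and> card T = k)"

definition cut_cost :: "network \<Rightarrow> nat set \<Rightarrow> nat" where
  "cut_cost N W = (case N of (n, c, T) \<Rightarrow>
      (\<Sum>u\<in>W. \<Sum>v\<in>{..<n} - W. c u v))"

definition mincut :: "network \<Rightarrow> nat set \<Rightarrow> nat" where
  "mincut N S = (case N of (n, c, T) \<Rightarrow>
      Min {cut_cost N W | W. W \<subseteq> {..<n} \<and> (W \<inter> T = S \<or> W \<inter> T = T - S)})"

definition TC_scheme :: "nat \<Rightarrow> real \<Rightarrow> (network \<Rightarrow> bool list) \<Rightarrow> (nat set \<Rightarrow> bool list \<Rightarrow> nat) \<Rightarrow> bool" where
  "TC_scheme k C0 P Qry = (\<forall>N. valid_network k C0 N \<longrightarrow>
      (\<forall>S. S \<subseteq> snd (snd N) \<and> S \<noteq> {} \<and> S \<noteq> snd (snd N) \<longrightarrow>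
           Qry S (P N) = mincut N S))"

end

theory Submission
  imports Defs "HOL-Library.FuncSet"
begin

(* We build, for k > 5 and p = (k-1) div 2, a family
   of n^(2^p) networks on n = 2^(k+1) vertices whose min-cut functions are pairwise distinct;
   a terminal-cuts scheme must then give them pairwise distinct memory images, so some image
   has at least log2 (n^(2^p)) = 2^p * (k+1) >= 2^(k/3) * ceil (log2 n) bits.

   1. Hub networks: terminals 0..k-1 and hubs k..k+m-1, each hub joined only to terminals.
      Every hub independently joins the cheaper side, so
      mincut S = sum over hubs x of min (e_x(S), e_x(complement of S)).
   2. Codes: hub x < 2^p is attached to terminal 0 (weight (p-1) w_x) and to the p terminals
      of a code set determined by the bits of x (weight w_x each).  Distinct code sets are
      incomparable, which yields a closed formula for all cuts avoiding terminal 0 and lets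
      one read off w_x = (sum of singleton cuts over the code of x) - mincut (code of x).
   3. Counting: an injection from a set of size 2^L into bit strings hits a string of
      length at least L. *)

definition hub_edge :: "nat \<Rightarrow> nat \<Rightarrow> (nat \<Rightarrow> nat \<Rightarrow> nat) \<Rightarrow> nat \<Rightarrow> nat \<Rightarrow> nat" where
  "hub_edge k m e u v = (if k \<le> u \<and> u < k + m \<and> v < k then e (u - k) v else 0)"

definition hub_cost :: "nat \<Rightarrow> nat \<Rightarrow> (nat \<Rightarrow> nat \<Rightarrow> nat) \<Rightarrow> nat \<Rightarrow> nat \<Rightarrow> nat" where
  "hub_cost k m e u v = hub_edge k m e u v + hub_edge k m e v u"

definition hub_net :: "nat \<Rightarrow> nat \<Rightarrow> nat \<Rightarrow> (nat \<Rightarrow> nat \<Rightarrow> nat) \<Rightarrow> network" where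
  "hub_net n k m e = (n, hub_cost k m e, {..<k})"

(* A hub edge written as a sum of point masses over (hub, terminal) pairs; this turns
   cut costs into sums whose order can be exchanged. *)
lemma hub_edge_as_sum:
  "hub_edge k m e u v = (\<Sum>x<m. \<Sum>t<k. if u = k + x \<and> v = t then e x t else 0)"
proof -
  have "(\<Sum>x<m. \<Sum>t<k. if u = k + x \<and> v = t then e x t else 0)
      = (\<Sum>x<m. if x = u - k then (if k \<le> u \<and> v < k then e x v else 0) else 0)"
    by (intro sum.cong) (auto simp: sum.delta)
  also have "\<dots> = hub_edge k m e u v"
    unfolding hub_edge_def by auto
  finally show ?thesis by simp
qed

lemma sum_over_cut:
  assumes "finite W" "finite R"
  shows "(\<Sum>u\<in>W. \<Sum>v\<in>R. \<Sum>x<m. \<Sum>t<k. if u = a x \<and> v = t then e x t else 0)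
       = (\<Sum>x<m. \<Sum>t<k. if a x \<in> W \<and> t \<in> R then e x t else 0)"
proof -
  have inner: "(\<Sum>v\<in>R. if u = a x \<and> v = t then e x t else 0)
      = (if u = a x \<and> t \<in> R then e x t else 0)" for u x t
    using assms(2) by (cases "u = a x") (simp_all add: sum.delta')
  have outer: "(\<Sum>u\<in>W. if u = a x \<and> t \<in> R then e x t else 0)
      = (if a x \<in> W \<and> t \<in> R then e x t else 0)" for x t
    using assms(1) by (cases "t \<in> R") (simp_all add: sum.delta)
  have "(\<Sum>u\<in>W. \<Sum>v\<in>R. \<Sum>x<m. \<Sum>t<k. if u = a x \<and> v = t then e x t else 0)
      = (\<Sum>u\<in>W. \<Sum>x<m. \<Sum>t<k. \<Sum>v\<in>R. if u = a x \<and> v = t then e x t else 0)"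
    by (simp add: sum.swap[of _ R])
  also have "\<dots> = (\<Sum>x<m. \<Sum>t<k. \<Sum>u\<in>W. if u = a x \<and> t \<in> R then e x t else 0)"
    unfolding inner by (simp add: sum.swap[of _ W])
  finally show ?thesis unfolding outer .
qed

lemma hub_cut_cost:
  assumes "k + m \<le> n" "W \<subseteq> {..<n}"
  shows "cut_cost (hub_net n k m e) W = (\<Sum>x<m. \<Sum>t<k. if (k + x \<in> W) \<noteq> (t \<in> W) then e x t else 0)"
proof -
  let ?R = "{..<n} - W"
  have fin: "finite W" "finite ?R" using assms(2) finite_subset by auto
  have out: "(\<Sum>u\<in>W. \<Sum>v\<in>?R. hub_edge k m e u v)
      = (\<Sum>x<m. \<Sum>t<k. if k + x \<in> W \<and> t \<in> ?R then e x t else 0)"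
    unfolding hub_edge_as_sum by (rule sum_over_cut[OF fin])
  have into: "(\<Sum>u\<in>W. \<Sum>v\<in>?R. hub_edge k m e v u)
      = (\<Sum>x<m. \<Sum>t<k. if k + x \<in> ?R \<and> t \<in> W then e x t else 0)"
    unfolding hub_edge_as_sum by (subst sum.swap) (rule sum_over_cut[OF fin(2,1)])
  have "cut_cost (hub_net n k m e) W
      = (\<Sum>u\<in>W. \<Sum>v\<in>?R. hub_edge k m e u v) + (\<Sum>u\<in>W. \<Sum>v\<in>?R. hub_edge k m e v u)"
    by (simp add: cut_cost_def hub_net_def hub_cost_def sum.distrib)
  also have "\<dots> = (\<Sum>x<m. \<Sum>t<k. if (k + x \<in> W) \<noteq> (t \<in> W) then e x t else 0)"
    unfolding out into sum.distrib[symmetric] using assms(1) by (intro sum.cong) auto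
  finally show ?thesis .
qed

lemma hub_side_cost:
  fixes k :: nat
  assumes "W \<inter> {..<k} = S"
  shows "(\<Sum>t<k. if h \<noteq> (t \<in> W) then e x t else 0)
       = (if h then sum (e x) ({..<k} - S) else sum (e x) S)"
proof -
  have "(\<Sum>t<k. if h \<noteq> (t \<in> W) then e x t else 0) = sum (e x) {t \<in> {..<k}. h \<noteq> (t \<in> W)}"
    by (rule sum.inter_filter[symmetric]) (rule finite_lessThan)
  also have "{t \<in> {..<k}. h \<noteq> (t \<in> W)} = (if h then {..<k} - S else S)"
    using assms by auto
  finally show ?thesis by simp
qed

lemma hub_cut_cost_ge:
  assumes "k + m \<le> n" "W \<subseteq> {..<n}" "S \<subseteq> {..<k}"
    and side: "W \<inter> {..<k} = S \<or> W \<inter> {..<k} = {..<k} - S"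
  shows "(\<Sum>x<m. min (sum (e x) S) (sum (e x) ({..<k} - S))) \<le> cut_cost (hub_net n k m e) W"
  unfolding hub_cut_cost[OF assms(1,2)]
proof (rule sum_mono)
  fix x
  from side show "min (sum (e x) S) (sum (e x) ({..<k} - S))
      \<le> (\<Sum>t<k. if (k + x \<in> W) \<noteq> (t \<in> W) then e x t else 0)"
  proof
    assume "W \<inter> {..<k} = S"
    from hub_side_cost[OF this, of "k + x \<in> W" e x] show ?thesis by simp
  next
    assume "W \<inter> {..<k} = {..<k} - S"
    from hub_side_cost[OF this, of "k + x \<in> W" e x] show ?thesis
      using assms(3) by (simp add: double_diff)
  qed
qed

lemma hub_optimal_cut:
  assumes "k + m \<le> n" "S \<subseteq> {..<k}"
  obtains W where "W \<subseteq> {..<n}" "W \<inter> {..<k} = S"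
    "cut_cost (hub_net n k m e) W = (\<Sum>x<m. min (sum (e x) S) (sum (e x) ({..<k} - S)))"
proof
  define W where "W = S \<union> (\<lambda>x. k + x) ` {x. x < m \<and> sum (e x) ({..<k} - S) \<le> sum (e x) S}"
  show W: "W \<subseteq> {..<n}" "W \<inter> {..<k} = S" using assms unfolding W_def by auto
  have hub_side: "(k + x \<in> W) = (sum (e x) ({..<k} - S) \<le> sum (e x) S)" if "x < m" for x
    using assms that unfolding W_def by auto
  show "cut_cost (hub_net n k m e) W = (\<Sum>x<m. min (sum (e x) S) (sum (e x) ({..<k} - S)))"
    unfolding hub_cut_cost[OF assms(1) W(1)] hub_side_cost[OF W(2)]
    by (intro sum.cong) (auto simp: hub_side)
qed

lemma hub_mincut:
  assumes "k + m \<le> n" "S \<subseteq> {..<k}"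
  shows "mincut (hub_net n k m e) S = (\<Sum>x<m. min (sum (e x) S) (sum (e x) ({..<k} - S)))"
proof -
  let ?cuts = "{cut_cost (hub_net n k m e) W | W. W \<subseteq> {..<n} \<and> (W \<inter> {..<k} = S \<or> W \<inter> {..<k} = {..<k} - S)}"
  have "finite ?cuts"
    by (rule finite_subset[of _ "cut_cost (hub_net n k m e) ` Pow {..<n}"]) auto
  moreover obtain W0 where "W0 \<subseteq> {..<n}" "W0 \<inter> {..<k} = S"
      "cut_cost (hub_net n k m e) W0 = (\<Sum>x<m. min (sum (e x) S) (sum (e x) ({..<k} - S)))"
    using hub_optimal_cut[OF assms] .
  then have "(\<Sum>x<m. min (sum (e x) S) (sum (e x) ({..<k} - S))) \<in> ?cuts"
    by (metis (mono_tags, lifting) mem_Collect_eq)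
  ultimately have "Min ?cuts = (\<Sum>x<m. min (sum (e x) S) (sum (e x) ({..<k} - S)))"
    using hub_cut_cost_ge[OF assms(1) _ assms(2)] by (intro Min_eqI) blast+
  then show ?thesis by (simp add: mincut_def hub_net_def)
qed

definition code_set :: "nat \<Rightarrow> nat \<Rightarrow> nat set" where
  "code_set p x = (\<lambda>i. 2 * i + 1 + (if bit x i then 1 else 0)) ` {..<p}"

lemma code_set_subset: "2 * p < k \<Longrightarrow> code_set p x \<subseteq> {..<k} - {0}"
  unfolding code_set_def by auto

lemma code_set_card: "card (code_set p x) = p"
proof -
  have "inj_on (\<lambda>i. 2 * i + 1 + (if bit x i then 1 else 0) :: nat) {..<p}"
    unfolding inj_on_def by (auto split: if_splits)
  then show ?thesis unfolding code_set_def by (simp add: card_image)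
qed

(* Distinct codes are incomparable: the code set determines all p low bits of x. *)
lemma code_set_antichain:
  assumes "x < 2 ^ p" "y < 2 ^ p" "code_set p x \<subseteq> code_set p y"
  shows "x = y"
proof -
  have "bit x i = bit y i" if "i < p" for i
  proof -
    have "2 * i + 1 + (if bit x i then 1 else 0) \<in> code_set p y"
      using assms(3) that unfolding code_set_def by auto
    then obtain j where "2 * i + 1 + (if bit x i then 1 else 0) = 2 * j + 1 + (if bit y j then 1 else 0 :: nat)"
      unfolding code_set_def by auto
    then show ?thesis by (auto split: if_splits) presburger+
  qed
  then have "take_bit p x = take_bit p y"
    by (intro bit_eqI) (auto simp: bit_take_bit_iff)
  then show ?thesis using assms(1,2) by (simp add: take_bit_nat_eq_self)
qed

definition code_weight :: "nat \<Rightarrow> (nat \<Rightarrow> nat) \<Rightarrow> nat \<Rightarrow> nat \<Rightarrow> nat" where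
  "code_weight p w x t = w x * (if t = 0 then p - 1 else if t \<in> code_set p x then 1 else 0)"

definition code_net :: "nat \<Rightarrow> nat \<Rightarrow> nat \<Rightarrow> (nat \<Rightarrow> nat) \<Rightarrow> network" where
  "code_net n k p w = hub_net n k (2 ^ p) (code_weight p w)"

lemma code_weight_sum:
  assumes "S \<subseteq> {..<k} - {0}"
  shows "sum (code_weight p w x) S = w x * card (S \<inter> code_set p x)"
proof -
  have "finite S" using assms finite_subset by blast
  have "sum (code_weight p w x) S = w x * (\<Sum>t\<in>S. if t \<in> code_set p x then 1 else 0)"
    using assms by (auto simp: code_weight_def sum_distrib_left intro!: sum.cong)
  also have "(\<Sum>t\<in>S. if t \<in> code_set p x then 1 else 0) = card (S \<inter> code_set p x)"
    using \<open>finite S\<close> by (simp add: sum.inter_restrict[symmetric])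
  finally show ?thesis .
qed

lemma code_weight_sum_compl:
  assumes "S \<subseteq> {..<k} - {0}" "2 * p < k"
  shows "sum (code_weight p w x) ({..<k} - S) = w x * (p - 1) + w x * card (code_set p x - S)"
proof -
  have zero: "0 \<in> {..<k} - S" using assms by auto
  have "({..<k} - S - {0}) \<inter> code_set p x = code_set p x - S"
    using code_set_subset[OF assms(2)] by auto
  moreover have "{..<k} - S - {0} \<subseteq> {..<k} - {0}" by auto
  ultimately have "sum (code_weight p w x) ({..<k} - S - {0}) = w x * card (code_set p x - S)"
    using code_weight_sum by metis
  then show ?thesis by (simp add: sum.remove[OF _ zero] code_weight_def)
qed

(* The cheaper side of hub x: its overlap with S, capped at p - 1 (the cap is reached
   only when the whole code lies in S). *)
lemma code_hub_min:
  assumes "S \<subseteq> {..<k} - {0}" "2 * p < k"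
  shows "min (sum (code_weight p w x) S) (sum (code_weight p w x) ({..<k} - S))
       = w x * min (card (S \<inter> code_set p x)) (p - 1)"
proof (cases "card (S \<inter> code_set p x) \<le> p - 1")
  case True
  then show ?thesis
    unfolding code_weight_sum[OF assms(1)] code_weight_sum_compl[OF assms]
    by (simp add: min_def trans_le_add1)
next
  case False
  have fin: "finite (code_set p x)" unfolding code_set_def by simp
  have "card (S \<inter> code_set p x) \<le> card (code_set p x)" by (rule card_mono[OF fin]) auto
  with False have covered: "S \<inter> code_set p x = code_set p x"
    using card_subset_eq[OF fin, of "S \<inter> code_set p x"] code_set_card[of p x] by auto
  then have "code_set p x - S = {}" by blast
  then have "card (code_set p x - S) = 0" by (simp only: card.empty)
  moreover have "card (S \<inter> code_set p x) = p" using covered code_set_card[of p x] by simp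
  moreover have "w x * (p - 1) \<le> w x * p" by simp
  ultimately show ?thesis
    unfolding code_weight_sum[OF assms(1)] code_weight_sum_compl[OF assms] by (simp add: min_absorb2)
qed

lemma code_net_mincut:
  assumes "2 * p < k" "k + 2 ^ p \<le> n" "S \<subseteq> {..<k} - {0}"
  shows "mincut (code_net n k p w) S = (\<Sum>x<2 ^ p. w x * min (card (S \<inter> code_set p x)) (p - 1))"
proof -
  have "S \<subseteq> {..<k}" using assms(3) by auto
  then have "mincut (code_net n k p w) S
      = (\<Sum>x<2 ^ p. min (sum (code_weight p w x) S) (sum (code_weight p w x) ({..<k} - S)))"
    unfolding code_net_def by (rule hub_mincut[OF assms(2)])
  then show ?thesis by (simp add: code_hub_min[OF assms(3,1)])
qed

lemma code_set_overlap:
  assumes "x < 2 ^ p" "y < 2 ^ p" "x \<noteq> y"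
  shows "card (code_set p x \<inter> code_set p y) \<le> p - 1"
proof -
  have fin: "finite (code_set p y)" unfolding code_set_def by simp
  have "code_set p x \<inter> code_set p y \<subset> code_set p y"
    using code_set_antichain[OF assms(2,1)] assms(3) by blast
  then have "card (code_set p x \<inter> code_set p y) < p"
    using psubset_card_mono[OF fin] code_set_card[of p y] by metis
  then show ?thesis by simp
qed

lemma code_net_mincut_single:
  assumes "2 \<le> p" "2 * p < k" "k + 2 ^ p \<le> n" "t \<in> {..<k} - {0}"
  shows "mincut (code_net n k p w) {t} = (\<Sum>x<2 ^ p. w x * (if t \<in> code_set p x then 1 else 0))"
proof -
  have "{t} \<subseteq> {..<k} - {0}" using assms(4) by blast
  moreover have "min (card ({t} \<inter> code_set p x)) (p - 1) = (if t \<in> code_set p x then 1 else 0)" for x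
    using assms(1) by auto
  ultimately show ?thesis by (simp add: code_net_mincut[OF assms(2,3)])
qed

(* Recovery of a hub weight from min-cut values: only hub x0 is capped on its own code,
   so the singleton cuts over the code exceed the cut of the code by exactly w x0. *)
lemma code_net_recover_weight:
  assumes "2 \<le> p" "2 * p < k" "k + 2 ^ p \<le> n" "x0 < 2 ^ p"
  shows "mincut (code_net n k p w) (code_set p x0) + w x0
       = (\<Sum>t\<in>code_set p x0. mincut (code_net n k p w) {t})"
proof -
  let ?Y = "code_set p x0" and ?hubs = "{..<2 ^ p} :: nat set"
  let ?overlap = "\<lambda>x. card (?Y \<inter> code_set p x)"
  have x0: "x0 \<in> ?hubs" using assms(4) by simp
  have finY: "finite ?Y" unfolding code_set_def by simp
  have self: "?overlap x0 = p" using code_set_card[of p x0] by simp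
  have single: "mincut (code_net n k p w) {t} = (\<Sum>x\<in>?hubs. w x * (if t \<in> code_set p x then 1 else 0))"
    if "t \<in> ?Y" for t
    using that code_set_subset[OF assms(2), of x0] by (intro code_net_mincut_single[OF assms(1-3)]) blast
  have others: "min (?overlap x) (p - 1) = ?overlap x" if "x \<in> ?hubs - {x0}" for x
    using code_set_overlap[of x0 p x] assms(4) that by auto
  have "mincut (code_net n k p w) ?Y = (\<Sum>x\<in>?hubs. w x * min (?overlap x) (p - 1))"
    by (rule code_net_mincut[OF assms(2,3) code_set_subset[OF assms(2)]])
  also have "\<dots> = w x0 * min (?overlap x0) (p - 1) + (\<Sum>x\<in>?hubs - {x0}. w x * min (?overlap x) (p - 1))"
    by (rule sum.remove[OF finite_lessThan x0])
  also have "\<dots> = w x0 * (p - 1) + (\<Sum>x\<in>?hubs - {x0}. w x * ?overlap x)"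
    unfolding self by (simp only: min_absorb2[OF diff_le_self] others cong: sum.cong)
  finally have "mincut (code_net n k p w) ?Y = w x0 * (p - 1) + (\<Sum>x\<in>?hubs - {x0}. w x * ?overlap x)" .
  moreover have "w x0 * (p - 1) + w x0 = w x0 * ?overlap x0"
    unfolding self using assms(1) by (cases p) simp_all
  ultimately have "mincut (code_net n k p w) ?Y + w x0
      = w x0 * ?overlap x0 + (\<Sum>x\<in>?hubs - {x0}. w x * ?overlap x)"
    by linarith
  also have "\<dots> = (\<Sum>x\<in>?hubs. w x * ?overlap x)"
    by (simp add: sum.remove[OF _ x0])
  also have "\<dots> = (\<Sum>x\<in>?hubs. \<Sum>t\<in>?Y. w x * (if t \<in> code_set p x then 1 else 0))"
    using finY by (simp add: sum_distrib_left[symmetric] sum.inter_restrict[symmetric])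
  also have "\<dots> = (\<Sum>t\<in>?Y. mincut (code_net n k p w) {t})"
    by (subst sum.swap) (intro sum.cong refl, simp add: single)
  finally show ?thesis .
qed

lemma code_net_weights_determined:
  assumes "2 \<le> p" "2 * p < k" "k + 2 ^ p \<le> n" "x < 2 ^ p"
    and same_cuts: "\<And>S. S \<subseteq> {..<k} \<Longrightarrow> S \<noteq> {} \<Longrightarrow> S \<noteq> {..<k} \<Longrightarrow>
                   mincut (code_net n k p w) S = mincut (code_net n k p w') S"
  shows "w x = w' x"
proof -
  let ?Y = "code_set p x"
  have Y: "?Y \<subseteq> {..<k}" "0 \<notin> ?Y" "0 < k" using code_set_subset[OF assms(2), of x] assms(2) by auto
  have "?Y \<noteq> {}" using code_set_card[of p x] assms(1) by auto
  then have "mincut (code_net n k p w) ?Y = mincut (code_net n k p w') ?Y"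
    using Y by (intro same_cuts) auto
  moreover have "mincut (code_net n k p w) {t} = mincut (code_net n k p w') {t}" if "t \<in> ?Y" for t
    using Y that by (intro same_cuts) auto
  then have "(\<Sum>t\<in>?Y. mincut (code_net n k p w) {t}) = (\<Sum>t\<in>?Y. mincut (code_net n k p w') {t})"
    by (rule sum.cong[OF refl])
  ultimately show ?thesis
    using code_net_recover_weight[OF assms(1-4), of w] code_net_recover_weight[OF assms(1-4), of w']
    by simp
qed

lemma code_net_valid:
  assumes "2 * p < k" "k + 2 ^ p \<le> n" "\<And>x. x < 2 ^ p \<Longrightarrow> w x < n"
  shows "valid_network k 2 (code_net n k p w)"
proof -
  let ?c = "hub_cost k (2 ^ p) (code_weight p w)"
  have "code_weight p w x t \<le> n * n" if "x < 2 ^ p" for x t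
  proof -
    have "code_weight p w x t \<le> w x * p"
      unfolding code_weight_def code_set_def by (auto intro: mult_le_mono2)
    also have "\<dots> \<le> n * n" using assms(1,2) assms(3)[OF that] by (intro mult_le_mono) auto
    finally show ?thesis .
  qed
  then have "?c u v \<le> n * n" for u v by (auto simp: hub_cost_def hub_edge_def)
  then have "real (?c u v) \<le> real n powr 2" for u v
    using assms(2) by (simp add: powr_numeral power2_eq_square flip: of_nat_mult)
  moreover have "?c u v = ?c v u" "?c u u = 0" for u v by (auto simp: hub_cost_def hub_edge_def)
  moreover have "\<not> (u < n \<and> v < n) \<Longrightarrow> ?c u v = 0" for u v
    using assms(2) by (auto simp: hub_cost_def hub_edge_def)
  ultimately show ?thesis using assms(2) by (auto simp: valid_network_def code_net_def hub_net_def)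
qed

lemma TC_scheme_memory_determines_mincuts:
  assumes "TC_scheme k C0 P Qry" "valid_network k C0 N" "valid_network k C0 N'"
    and "snd (snd N) = T" "snd (snd N') = T" "P N = P N'"
    and "S \<subseteq> T" "S \<noteq> {}" "S \<noteq> T"
  shows "mincut N S = mincut N' S"
  using assms unfolding TC_scheme_def by metis

lemma TC_scheme_injective_on_code_nets:
  assumes "TC_scheme k 2 P Qry" "2 \<le> p" "2 * p < k" "k + 2 ^ p \<le> n"
  shows "inj_on (\<lambda>w. P (code_net n k p w)) (PiE {..<(2::nat) ^ p} (\<lambda>_. {..<n}))"
proof (rule inj_onI)
  fix w w' assume w: "w \<in> PiE {..<(2::nat) ^ p} (\<lambda>_. {..<n})" and w': "w' \<in> PiE {..<(2::nat) ^ p} (\<lambda>_. {..<n})"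
    and same_memory: "P (code_net n k p w) = P (code_net n k p w')"
  have "valid_network k 2 (code_net n k p v)" if "v \<in> PiE {..<(2::nat) ^ p} (\<lambda>_. {..<n})" for v
    using that by (intro code_net_valid[OF assms(3,4)]) (auto dest: PiE_mem)
  then have "mincut (code_net n k p w) S = mincut (code_net n k p w') S"
    if "S \<subseteq> {..<k}" "S \<noteq> {}" "S \<noteq> {..<k}" for S
    using TC_scheme_memory_determines_mincuts[OF assms(1) _ _ _ _ same_memory that] w w'
    by (simp add: code_net_def hub_net_def)
  then show "w = w'"
    using code_net_weights_determined[OF assms(2-4)] by (intro PiE_ext[OF w w']) blast
qed

(* Counting: fewer than 2^L bit strings are shorter than L. *)
lemma inj_into_bool_lists_long:
  fixes f :: "'a \<Rightarrow> bool list"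
  assumes "inj_on f F" "card F = 2 ^ L"
  shows "\<exists>a\<in>F. L \<le> length (f a)"
proof (rule ccontr)
  assume "\<not> ?thesis"
  moreover have "F \<noteq> {}" using assms(2) by auto
  ultimately have "0 < L" by auto
  with \<open>\<not> ?thesis\<close> have short: "f ` F \<subseteq> {xs. set xs \<subseteq> UNIV \<and> length xs \<le> L - 1}"
    by fastforce
  have "2 ^ L = card (f ` F)" using assms card_image by metis
  also have "\<dots> \<le> (\<Sum>i\<le>L - 1. 2 ^ i)"
    using card_mono[OF finite_lists_length_le[of "UNIV :: bool set" "L - 1"] short]
      card_lists_length_le[of "UNIV :: bool set" "L - 1"]
    by (simp add: card_UNIV_bool)
  also have "\<dots> = 2 ^ L - 1"
    using \<open>0 < L\<close> sum_power2[of L] by (simp add: atLeast0LessThan lessThan_Suc_atMost[symmetric])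
  finally show False using zero_less_power[of "2::nat" L] by linarith
qed

lemma parameter_choice:
  assumes "5 < k" "p = (k - 1) div 2"
  shows "2 \<le> p" "2 * p < k" "k \<le> 3 * p" "k + 2 ^ p \<le> (2::nat) ^ (k + 1)"
proof -
  show p: "2 \<le> p" "2 * p < k" "k \<le> 3 * p" using assms by auto
  have "k < 2 ^ k" "(2::nat) ^ p \<le> 2 ^ k" using p(2) by (auto intro: less_exp power_increasing)
  moreover have "(2::nat) ^ (k + 1) = 2 ^ k + 2 ^ k" by simp
  ultimately show "k + 2 ^ p \<le> (2::nat) ^ (k + 1)" by linarith
qed

lemma memory_bound_arith:
  assumes "k \<le> 3 * p"
  shows "2 powr (1/3 * real k) * real_of_int (ceiling (log 2 (real ((2::nat) ^ (k + 1)))))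
       \<le> real (2 ^ p * (k + 1))"
proof -
  have "log 2 (real ((2::nat) ^ (k + 1))) = real (k + 1)"
    unfolding of_nat_power of_nat_numeral by (rule log_pow_cancel) auto
  then have word: "real_of_int (ceiling (log 2 (real ((2::nat) ^ (k + 1))))) = real (k + 1)" by simp
  have "2 powr (1/3 * real k) \<le> 2 ^ p"
    using assms powr_mono[of "1/3 * real k" "real p" 2] by (simp add: powr_realpow)
  then have "2 powr (1/3 * real k) * real (k + 1) \<le> 2 ^ p * real (k + 1)"
    by (rule mult_right_mono) simp
  then show ?thesis unfolding word by (simp only: of_nat_mult of_nat_power of_nat_numeral)
qed

theorem theorem1p4:
  shows "\<exists>(\<gamma>::real) (C0::real). \<gamma> > 0 \<and> C0 \<ge> 1 \<and>
     (\<forall>k::nat. k > 5 \<longrightarrow>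
        (\<forall>P Qry. TC_scheme k C0 P Qry \<longrightarrow>
           (\<exists>N. valid_network k C0 N \<and>
                real (length (P N)) \<ge> 2 powr (\<gamma> * real k) * real_of_int (ceiling (log 2 (real (fst N)))))))"
proof (rule exI[of _ "1/3"], rule exI[of _ 2], intro conjI allI impI)
  show "(0::real) < 1/3" "(1::real) \<le> 2" by simp_all
  fix k :: nat and P Qry
  assume "5 < k" and TC: "TC_scheme k 2 P Qry"
  define p where "p = (k - 1) div 2"
  define n :: nat where "n = 2 ^ (k + 1)"
  note p = parameter_choice[OF \<open>5 < k\<close> p_def, folded n_def]
  have "card (PiE {..<(2::nat) ^ p} (\<lambda>_. {..<n})) = 2 ^ (2 ^ p * (k + 1))"
    by (simp add: card_PiE n_def power_mult[symmetric] mult.commute power_add)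
  then obtain w where w: "w \<in> PiE {..<(2::nat) ^ p} (\<lambda>_. {..<n})"
    and long: "2 ^ p * (k + 1) \<le> length (P (code_net n k p w))"
    using inj_into_bool_lists_long[OF TC_scheme_injective_on_code_nets[OF TC p(1,2,4)]] by blast
  have "valid_network k 2 (code_net n k p w)"
    using w by (intro code_net_valid[OF p(2,4)]) (auto dest: PiE_mem)
  moreover have "2 powr (1/3 * real k) * real_of_int (ceiling (log 2 (real n)))
      \<le> real (length (P (code_net n k p w)))"
    using memory_bound_arith[OF p(3)] long unfolding n_def by linarith
  ultimately show "\<exists>N. valid_network k 2 N \<and>
      2 powr (1/3 * real k) * real_of_int (ceiling (log 2 (real (fst N)))) \<le> real (length (P N))"
    by (intro exI[of _ "code_net n k p w"]) (simp add: code_net_def hub_net_def)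
qed

end
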